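(* Let $(D,\sqsubseteq)$ be a dcpo with its Scott topology and let $A\in\mathbf{\Sigma}^0_2(D)$. If $(x_i)_{i\in I}$ is a family indexed by a directed preordered set $I$ with $i\le j\Rightarrow x_i\sqsubseteq x_j$, and its supremum $\bigsqcup_i x_i$ belongs to $A$, then there is $i_0\in I$ such that $x_i\in A$ for all $i\ge i_0$. In particular, if $D$ is a continuous domain with basis $B\subseteq D$ and $x\in A$, then there exists $b\in B$ with $b\ll x$ and $\llbracket b,x]\subseteq A$.
   Context: A dcpo is a poset in which every nonempty directed subset has a supremum; its Scott topology consists of upsets $O$ such that every directed set with supremum in $O$ has an element in $O$. $\mathbf{\Sigma}^0_2(D)$: countable unions of sets $U\setminus V$ with $U,V$ Scott open. Way-below: $x\ll y$ iff for every directed $S$ with $y\sqsubseteq\sqcup S$ there is $s\in S$ with $x\sqsubseteq s$. A continuous domain with basis $B$ is a dcpo with $B\subseteq D$ such that for every $x$, $B\cap\{z:z\ll x\}$ is directed with supremum $x$. $\llbracket b,x]=\{y\in D: b\ll y\sqsubseteq x\}$. *)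

theory Defs
  imports Main
begin

text \<open>The dcpo is the whole type 'a with its partial order.\<close>

definition directed :: "'a::order set \<Rightarrow> bool" where
  "directed S \<longleftrightarrow> S \<noteq> {} \<and> (\<forall>x\<in>S. \<forall>y\<in>S. \<exists>z\<in>S. x \<le> z \<and> y \<le> z)"

definition is_lub :: "'a::order set \<Rightarrow> 'a \<Rightarrow> bool" where
  "is_lub S s \<longleftrightarrow> (\<forall>x\<in>S. x \<le> s) \<and> (\<forall>u. (\<forall>x\<in>S. x \<le> u) \<longrightarrow> s \<le> u)"

definition dsup :: "'a::order set \<Rightarrow> 'a" where
  "dsup S = (THE s. is_lub S s)"

definition dcpo :: "'a::order itself \<Rightarrow> bool" where
  "dcpo _ \<longleftrightarrow> (\<forall>S::'a set. directed S \<longrightarrow> (\<exists>s. is_lub S s))"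

definition scott_open :: "'a::order set \<Rightarrow> bool" where
  "scott_open W \<longleftrightarrow> (\<forall>x y. x \<in> W \<and> x \<le> y \<longrightarrow> y \<in> W) \<and>
     (\<forall>S s. directed S \<and> is_lub S s \<and> s \<in> W \<longrightarrow> S \<inter> W \<noteq> {})"

definition Sigma02 :: "'a::order set \<Rightarrow> bool" where
  "Sigma02 A \<longleftrightarrow> (\<exists>U V :: nat \<Rightarrow> 'a set. (\<forall>n. scott_open (U n) \<and> scott_open (V n)) \<and>
     A = (\<Union>n. U n - V n))"

definition way_below :: "'a::order \<Rightarrow> 'a \<Rightarrow> bool" (infix "\<lless>" 50) where
  "x \<lless> y \<longleftrightarrow> (\<forall>S s. directed S \<and> is_lub S s \<and> y \<le> s \<longrightarrow> (\<exists>t\<in>S. x \<le> t))"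

definition continuous_basis :: "'a::order set \<Rightarrow> bool" where
  "continuous_basis B \<longleftrightarrow> (\<forall>x. directed {b\<in>B. b \<lless> x} \<and> is_lub {b\<in>B. b \<lless> x} x)"

end

theory Submission
  imports Defs
begin

text \<open>A set \<open>U - V\<close> with \<open>U\<close>, \<open>V\<close> Scott open is convex, and it is entered by every directed set
  whose supremum lies in it: the supremum lies in \<open>U\<close>, so some member \<open>t\<close> does, and then the whole
  interval \<open>[t, \<Squnion>S]\<close> lies in \<open>U\<close> (upward closure) and outside \<open>V\<close> (else \<open>\<Squnion>S \<in> V\<close>).
  Both parts of the theorem are instances of this, for the directed set \<open>x ` I\<close> and for the
  directed set of basis elements way below a point.\<close>

lemma is_lub_unique: "is_lub S s \<Longrightarrow> is_lub S t \<Longrightarrow> s = t"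
  unfolding is_lub_def by (meson order_antisym)

lemma dsup_eqI: "is_lub S s \<Longrightarrow> dsup S = s"
  unfolding dsup_def using is_lub_unique by blast

lemma way_below_imp_le: "b \<lless> z \<Longrightarrow> b \<le> z"
proof -
  assume "b \<lless> z"
  moreover have "directed {z}" "is_lub {z} z"
    unfolding directed_def is_lub_def by auto
  ultimately show ?thesis unfolding way_below_def by blast
qed

lemma directed_image:
  assumes "I \<noteq> {}" and "\<forall>i\<in>I. \<forall>j\<in>I. \<exists>k\<in>I. R i k \<and> R j k"
    and "\<forall>i\<in>I. \<forall>j\<in>I. R i j \<longrightarrow> x i \<le> x j"
  shows "directed (x ` I)"
  unfolding directed_def
proof (intro conjI ballI)
  show "x ` I \<noteq> {}" using assms(1) by blast
  fix a c assume "a \<in> x ` I" "c \<in> x ` I"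
  then obtain i j where "i \<in> I" "j \<in> I" "a = x i" "c = x j" by blast
  with assms(2,3) show "\<exists>z\<in>x ` I. a \<le> z \<and> c \<le> z" by blast
qed

lemma scott_open_upward: "scott_open W \<Longrightarrow> a \<in> W \<Longrightarrow> a \<le> c \<Longrightarrow> c \<in> W"
  unfolding scott_open_def by blast

lemma scott_open_meets_directed:
  "scott_open W \<Longrightarrow> directed S \<Longrightarrow> is_lub S s \<Longrightarrow> s \<in> W \<Longrightarrow> \<exists>t\<in>S. t \<in> W"
  unfolding scott_open_def by blast

lemma Sigma02_interval_below_lub:
  assumes "Sigma02 A" and "directed S" and "is_lub S s" and "s \<in> A"
  shows "\<exists>t\<in>S. {z. t \<le> z \<and> z \<le> s} \<subseteq> A"
proof -
  obtain U V :: "nat \<Rightarrow> 'a set" where UV: "\<And>n. scott_open (U n)" "\<And>n. scott_open (V n)"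
    and A: "A = (\<Union>n. U n - V n)"
    using assms(1) unfolding Sigma02_def by metis
  obtain n where "s \<in> U n" "s \<notin> V n" using assms(4) A by blast
  obtain t where "t \<in> S" "t \<in> U n"
    using scott_open_meets_directed[OF UV(1) assms(2,3) \<open>s \<in> U n\<close>] by blast
  have "z \<in> U n - V n" if "t \<le> z" "z \<le> s" for z
    using that \<open>t \<in> U n\<close> \<open>s \<notin> V n\<close> scott_open_upward[OF UV(1)] scott_open_upward[OF UV(2)]
    by blast
  with \<open>t \<in> S\<close> A show ?thesis by blast
qed

theorem proposition4p4:
  fixes A :: "'a::order set"
  assumes "dcpo TYPE('a)" and "Sigma02 A"
  shows "(\<forall>(I :: 'i set) (R :: 'i \<Rightarrow> 'i \<Rightarrow> bool) (x :: 'i \<Rightarrow> 'a).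
            (\<forall>i\<in>I. R i i) \<and> (\<forall>i\<in>I. \<forall>j\<in>I. \<forall>k\<in>I. R i j \<and> R j k \<longrightarrow> R i k) \<and>
            I \<noteq> {} \<and> (\<forall>i\<in>I. \<forall>j\<in>I. \<exists>k\<in>I. R i k \<and> R j k) \<and>
            (\<forall>i\<in>I. \<forall>j\<in>I. R i j \<longrightarrow> x i \<le> x j) \<and>
            dsup (x ` I) \<in> A
          \<longrightarrow> (\<exists>i0\<in>I. \<forall>i\<in>I. R i0 i \<longrightarrow> x i \<in> A))
      \<and> (\<forall>B y. continuous_basis B \<and> y \<in> A \<longrightarrow>
            (\<exists>b\<in>B. b \<lless> y \<and> {z. b \<lless> z \<and> z \<le> y} \<subseteq> A))"
proof (intro conjI allI impI; elim conjE)
  fix I :: "'i set" and R x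
  assume ne: "I \<noteq> {}" and up_dir: "\<forall>i\<in>I. \<forall>j\<in>I. \<exists>k\<in>I. R i k \<and> R j k"
    and mono: "\<forall>i\<in>I. \<forall>j\<in>I. R i j \<longrightarrow> x i \<le> x j" and "dsup (x ` I) \<in> A"
  have dir: "directed (x ` I)" using ne up_dir mono by (rule directed_image)
  then obtain s where s: "is_lub (x ` I) s" using assms(1) unfolding dcpo_def by blast
  with \<open>dsup (x ` I) \<in> A\<close> have "s \<in> A" by (simp add: dsup_eqI)
  then obtain i0 where "i0 \<in> I" and i0: "{z. x i0 \<le> z \<and> z \<le> s} \<subseteq> A"
    using Sigma02_interval_below_lub[OF assms(2) dir s] by blast
  have "x i \<in> A" if "i \<in> I" "R i0 i" for i
    using that i0 mono \<open>i0 \<in> I\<close> s unfolding is_lub_def by blast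
  with \<open>i0 \<in> I\<close> show "\<exists>i0\<in>I. \<forall>i\<in>I. R i0 i \<longrightarrow> x i \<in> A" by blast
next
  fix B :: "'a set" and y :: 'a
  assume "continuous_basis B" "y \<in> A"
  then have "directed {b\<in>B. b \<lless> y}" "is_lub {b\<in>B. b \<lless> y} y"
    unfolding continuous_basis_def by auto
  from Sigma02_interval_below_lub[OF assms(2) this \<open>y \<in> A\<close>]
  show "\<exists>b\<in>B. b \<lless> y \<and> {z. b \<lless> z \<and> z \<le> y} \<subseteq> A"
    using way_below_imp_le by blast
qed

end
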